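(* Let $C>0$ and let $X_1,\dots,X_n$ be i.i.d. random variables on $[0,1]$ with law $\mu$, $X$ a generic copy. For mappings $g,h:[0,1]\to[-C,C]$ let $$\Delta_n(g-h)=\frac1n\sum_{i=1}^n\left\{(g(X_i)-h(X_i))^2-\mathbb{E}\left[(g(X)-h(X))^2\right]\right\}.$$ Let $g$ be a function from $[0,1]$ to $[-C,C]$ and let $\mathcal{C}^+_{[0,1]}$ be the set of non-decreasing functions from $[0,1]$ to $[-C,C]$. Then there exist positive real numbers $\alpha',\beta',c_1',c_2'$ depending only on $C$ such that, for all $n$, $$\mathbb{P}\left(\sup_{h\in\mathcal{C}^+_{[0,1]}}|\Delta_n(g-h)|>n^{-\alpha'}\right)\le c_1'\exp\left(-c_2'n^{\beta'}\right).$$ *)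

theory Defs
  imports "HOL-Probability.Probability"
begin

text \<open>Empirical deviation: Delta_n(f) = (1/n) sum_{i=1}^n ( f(X_i)^2 - E[f(X)^2] ),
  where the generic copy X is taken to be X_1 (all X_i have the same law).\<close>
definition Delta :: "'a measure \<Rightarrow> (nat \<Rightarrow> 'a \<Rightarrow> real) \<Rightarrow> nat \<Rightarrow> (real \<Rightarrow> real) \<Rightarrow> 'a \<Rightarrow> real" where
  "Delta M X n f \<omega> =
     (1 / real n) * (\<Sum>i\<in>{1..n}. (f (X i \<omega>))\<^sup>2 - (\<integral>\<omega>'. (f (X 1 \<omega>'))\<^sup>2 \<partial>M))"

definition mono_class :: "real \<Rightarrow> (real \<Rightarrow> real) set" where
  "mono_class C = {h. mono_on {0..1} h \<and> (\<forall>x\<in>{0..1}. \<bar>h x\<bar> \<le> C)}"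

end

theory Submission
  imports Defs
begin

text \<open>Monotone functions from \<open>[0, 1]\<close> to \<open>[-C, C]\<close> admit few brackets. Take a grid
  \<open>0 = t\<^sub>0 \<le> \<dots> \<le> t\<^sub>m\<close> of quantiles of the law of \<open>X\<close>, so that every open cell has mass at most
  \<open>1/m\<close>, and round each value \<open>h(t\<^sub>j)\<close> down to the mesh \<open>2C/m\<close>. The resulting code of \<open>h\<close>
  determines a step function \<open>L \<le> h \<le> L + W\<close> whose width \<open>W\<close> has expectation \<open>O(C/m)\<close>, and
  there are at most \<open>(m + 1)\<^bsup>m + 1\<^esup>\<close> codes. Since \<open>|(g - h)\<^sup>2 - (g - L)\<^sup>2| \<le> 4CW\<close>, the
  deviation \<open>\<Delta>\<^sub>n(g - h)\<close> is controlled uniformly in \<open>h\<close> by the deviations of the finitely many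
  functions \<open>(g - L)\<^sup>2\<close> and \<open>W\<close>, up to \<open>O(1/m)\<close>. Hoeffding's inequality and a union bound over
  the codes give a failure probability of at most \<open>4 (m + 1)\<^bsup>m + 1\<^esup> exp(-2n / (m R)\<^sup>2)\<close>, and
  \<open>m \<approx> n\<^bsup>1/8\<^esup>\<close> yields the theorem with \<open>\<alpha>' = 1/16\<close> and \<open>\<beta>' = 1/4\<close>.\<close>

lemma abs_diff_squares_le:
  fixes g h l w C :: real
  assumes "\<bar>g\<bar> \<le> C" "\<bar>h\<bar> \<le> C" "- C \<le> l" "l \<le> h" "h \<le> l + w"
  shows "\<bar>(g - h)\<^sup>2 - (g - l)\<^sup>2\<bar> \<le> 4 * C * w"
proof -
  have "\<bar>(g - h)\<^sup>2 - (g - l)\<^sup>2\<bar> = \<bar>h - l\<bar> * \<bar>h + l - 2 * g\<bar>"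
    by (simp add: power2_eq_square algebra_simps flip: abs_mult)
  also have "\<dots> \<le> w * (4 * C)"
    using assms by (intro mult_mono) auto
  finally show ?thesis by (simp only: mult.commute)
qed

lemma self_power_le_exp: "real ((m + 1) ^ (m + 1)) \<le> exp (2 * (real m)\<^sup>2)"
proof -
  have "real ((m + 1) ^ (m + 1)) = real (m + 1) ^ (m + 1)"
    by (rule of_nat_power)
  also have "\<dots> = exp (ln (real (m + 1) ^ (m + 1)))"
    by (simp add: exp_ln)
  also have "ln (real (m + 1) ^ (m + 1)) = real (m + 1) * ln (real (m + 1))"
    by (rule ln_realpow)
  finally have self_power: "real ((m + 1) ^ (m + 1)) = exp (real (m + 1) * ln (real (m + 1)))" .
  have "ln (real (m + 1)) \<le> real m"
    using ln_le_minus_one[of "real (m + 1)"] by simp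
  then have "real (m + 1) * ln (real (m + 1)) \<le> real (m + 1) * real m"
    by (intro mult_left_mono) auto
  also have "\<dots> \<le> 2 * (real m)\<^sup>2"
    by (simp add: power2_eq_square algebra_simps mult_le_cancel_left1)
  finally show ?thesis
    unfolding self_power by simp
qed

lemma cubic_tradeoff_le:
  fixes u R :: real
  assumes "0 \<le> u" "0 < R"
  shows "3 * u - 2 * u ^ 3 / R\<^sup>2 \<le> 6 * R"
proof (cases "u \<le> 2 * R")
  case True
  have "0 \<le> 2 * u ^ 3 / R\<^sup>2"
    using assms by simp
  with True show ?thesis by linarith
next
  case False
  then have "(2 * R)\<^sup>2 \<le> u\<^sup>2"
    using assms by (intro power_mono) auto
  then have "4 * R\<^sup>2 * u \<le> u\<^sup>2 * u"
    using assms by (intro mult_right_mono) (auto simp: power_mult_distrib)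
  then have "4 * u \<le> u ^ 3 / R\<^sup>2"
    using assms by (simp add: field_simps power2_eq_square power3_eq_cube)
  with assms show ?thesis by linarith
qed

lemma self_power_hoeffding_tradeoff:
  fixes r R :: real and m :: nat
  assumes r: "1 \<le> r" and R: "0 < R" and m: "real m \<le> r\<^sup>2" "r\<^sup>2 < real m + 1"
  shows "real ((m + 1) ^ (m + 1)) * exp (-2 * r ^ 16 * (1 / real m)\<^sup>2 / R\<^sup>2) \<le> exp (6 * R - r ^ 4)"
proof -
  have "1 \<le> r\<^sup>2"
    using r by (simp add: one_le_power)
  then have m_pos: "0 < real m"
    using m(2) by linarith
  have m_sq: "(real m)\<^sup>2 \<le> r ^ 4"
    using power_mono[OF m(1), of 2] m_pos by (simp add: power_mult[symmetric])
  have "real ((m + 1) ^ (m + 1)) \<le> exp (2 * r ^ 4)"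
    using self_power_le_exp[of m] m_sq by (simp add: order_trans)
  moreover have "2 * (r ^ 4) ^ 3 / R\<^sup>2 \<le> 2 * r ^ 16 * (1 / real m)\<^sup>2 / R\<^sup>2"
  proof -
    have "(r ^ 4) ^ 3 = r ^ 16 / r ^ 4"
      using r by (simp add: field_simps flip: power_add power_mult)
    also have "\<dots> \<le> r ^ 16 / (real m)\<^sup>2"
      using m_sq m_pos r by (intro divide_left_mono) auto
    finally have "(r ^ 4) ^ 3 \<le> r ^ 16 * (1 / real m)\<^sup>2"
      by (simp add: power_divide)
    from divide_right_mono[OF mult_left_mono[OF this, of 2], of "R\<^sup>2"] show ?thesis
      by (simp add: mult.assoc)
  qed
  ultimately have "real ((m + 1) ^ (m + 1)) * exp (-2 * r ^ 16 * (1 / real m)\<^sup>2 / R\<^sup>2)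
      \<le> exp (2 * r ^ 4) * exp (- (2 * (r ^ 4) ^ 3 / R\<^sup>2))"
    by (intro mult_mono) auto
  also have "\<dots> = exp (3 * r ^ 4 - 2 * (r ^ 4) ^ 3 / R\<^sup>2 - r ^ 4)"
    by (simp add: exp_add[symmetric])
  also have "\<dots> \<le> exp (6 * R - r ^ 4)"
    using cubic_tradeoff_le[of "r ^ 4" R] r R by simp
  finally show ?thesis .
qed

lemma measurable_clamp_unit:
  fixes f :: "real \<Rightarrow> 'b::topological_space"
  assumes "f \<in> borel_measurable (restrict_space borel {0..1})"
  shows "(\<lambda>x. f (max 0 (min 1 x))) \<in> borel_measurable borel"
proof -
  have "(\<lambda>x::real. max 0 (min 1 x)) \<in> borel \<rightarrow>\<^sub>M restrict_space borel {0..1}"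
    by (intro measurable_restrict_space2) auto
  from measurable_comp[OF this assms] show ?thesis
    by (simp add: comp_def)
qed

section \<open>Quantile grids and brackets for monotone functions\<close>

lemma (in real_distribution) quantile_grid_exists:
  assumes unit: "measure M {0..1} = 1" and m: "m \<ge> 1"
  obtains t :: "nat \<Rightarrow> real"
  where "t 0 = 0" "\<And>j. j \<le> m \<Longrightarrow> t j \<in> {0..1}" "mono_on {..m} t"
    "\<And>j. j \<in> {1..m} \<Longrightarrow> measure M {t (j - 1)<..<t j} \<le> 1 / real m"
    "measure M {t m<..} = 0"
proof -
  have null_outside: "measure M (- {0..1}) = 0"
    using prob_compl[of "{0..1}"] unit by (simp add: Compl_eq_Diff_UNIV)
  define S where "S j = {s \<in> {0..1}. real j / real m \<le> cdf M s}" for j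
  define t where "t j = (if j = 0 then 0 else Inf (S j))" for j
  have one_in_S: "1 \<in> S j" if "j \<le> m" for j
  proof -
    have "measure M {0..1} \<le> cdf M 1"
      unfolding cdf_def by (rule finite_measure_mono) auto
    moreover have "real j / real m \<le> 1" using that m by simp
    ultimately show ?thesis using unit by (simp add: S_def)
  qed
  have bdd: "bdd_below (S j)" for j
    unfolding S_def by (rule bdd_belowI[of _ 0]) auto
  have t_unit: "t j \<in> {0..1}" if "j \<le> m" for j
  proof (cases "j = 0")
    case False
    have "Inf (S j) \<le> 1" by (rule cInf_lower[OF one_in_S[OF that] bdd])
    moreover have "0 \<le> Inf (S j)"
      using one_in_S[OF that] by (intro cInf_greatest) (auto simp: S_def)
    ultimately show ?thesis using False by (simp add: t_def)
  qed (simp add: t_def)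
  have S_antimono: "S j \<subseteq> S i" if "i \<le> j" for i j
  proof
    fix s assume "s \<in> S j"
    moreover have "real i / real m \<le> real j / real m"
      using that by (simp add: divide_right_mono)
    ultimately show "s \<in> S i" by (auto simp: S_def)
  qed
  have t_mono: "mono_on {..m} t"
  proof (rule mono_onI)
    fix i j assume "i \<in> {..m}" "j \<in> {..m}" "i \<le> j"
    then show "t i \<le> t j"
      using t_unit[of j] cInf_superset_mono[OF _ bdd S_antimono, of j i] one_in_S[of j]
      by (auto simp: t_def)
  qed
  have cdf_t_ge: "real j / real m \<le> cdf M (t j)" if j: "j \<in> {1..m}" for j
  proof (rule tendsto_lowerbound[OF cdf_is_right_cont[unfolded continuous_within]])
    show "\<forall>\<^sub>F s in at_right (t j). real j / real m \<le> cdf M s"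
    proof (rule eventually_at_rightI[of "t j" "t j + 1"])
      fix s assume "s \<in> {t j<..<t j + 1}"
      then obtain s' where "s' \<in> S j" "s' < s"
        using cInf_lessD[of "S j" s] one_in_S[of j] j by (auto simp: t_def)
      then show "real j / real m \<le> cdf M s"
        using cdf_nondecreasing[of s' s] by (auto simp: S_def)
    qed simp
  qed simp
  have cdf_left_le: "measure M {..<t j} \<le> real j / real m" if "j \<in> {1..m}" for j
  proof (rule tendsto_upperbound[OF cdf_at_left])
    show "\<forall>\<^sub>F s in at_left (t j). cdf M s \<le> real j / real m"
    proof (rule eventually_at_leftI[of "t j - 1" "t j"])
      fix s assume s: "s \<in> {t j - 1<..<t j}"
      show "cdf M s \<le> real j / real m"
      proof (cases "s < 0")
        case True
        then have "cdf M s \<le> measure M (- {0..1})"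
          unfolding cdf_def by (intro finite_measure_mono) auto
        then show ?thesis using null_outside by (simp add: order_trans)
      next
        case False
        have "s \<notin> S j"
          using s cInf_lower[OF _ bdd, of s j] that by (auto simp: t_def)
        then show ?thesis using False s t_unit[of j] that by (auto simp: S_def)
      qed
    qed simp
  qed simp
  show ?thesis
  proof
    show "t 0 = 0" by (simp add: t_def)
    show "t j \<in> {0..1}" if "j \<le> m" for j using t_unit that .
    show "mono_on {..m} t" by (rule t_mono)
  next
    fix j assume j: "j \<in> {1..m}"
    show "measure M {t (j - 1)<..<t j} \<le> 1 / real m"
    proof (cases "t (j - 1) < t j")
      case True
      have "{t (j - 1)<..<t j} = {..<t j} - {..t (j - 1)}" by auto
      then have "measure M {t (j - 1)<..<t j} = measure M {..<t j} - cdf M (t (j - 1))"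
        using True by (simp add: cdf_def finite_measure_Diff subset_eq)
      moreover have "real (j - 1) / real m \<le> cdf M (t (j - 1))"
      proof (cases "j = 1")
        case False
        then have "j - 1 \<in> {1..m}" using j by auto
        then show ?thesis by (rule cdf_t_ge)
      qed (simp add: cdf_nonneg)
      moreover have "real (j - 1) = real j - 1" using j by auto
      ultimately show ?thesis using cdf_left_le[OF j] by (simp add: diff_divide_distrib)
    qed simp
  next
    have "measure M {t m<..} = 1 - cdf M (t m)"
      using prob_compl[of "{..t m}"] by (simp add: cdf_def Compl_eq_Diff_UNIV[symmetric] Compl_atMost)
    then show "measure M {t m<..} = 0"
      using cdf_t_ge[of m] cdf_bounded_prob[of "t m"] measure_nonneg[of M "{t m<..}"] m by simp
  qed
qed

locale monotone_bracketing =
  fixes C :: real and m :: nat and t :: "nat \<Rightarrow> real"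
  assumes C_pos: "C > 0" and m_pos: "m \<ge> 1" and t_zero: "t 0 = 0"
    and t_unit: "\<And>j. j \<le> m \<Longrightarrow> t j \<in> {0..1}" and t_mono: "mono_on {..m} t"
begin

definition mesh :: real where
  "mesh = 2 * C / real m"

definition level :: "(real \<Rightarrow> real) \<Rightarrow> nat \<Rightarrow> nat" where
  "level h = restrict (\<lambda>j. nat \<lfloor>(h (t j) + C) / mesh\<rfloor>) {..m}"

text \<open>On the cell \<open>[t k, t (k + 1))\<close> the step function \<open>lower a\<close> has the value
  \<open>-C + mesh * a k\<close>. The width is one mesh step plus the jump of \<open>lower a\<close> across the open
  cell containing \<open>x\<close>, plus \<open>2 * C\<close> to the right of \<open>t m\<close>.\<close>

definition lower :: "(nat \<Rightarrow> nat) \<Rightarrow> real \<Rightarrow> real" where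
  "lower a x = - C + mesh * real (a 0)
     + mesh * (\<Sum>j\<in>{1..m}. (real (a j) - real (a (j - 1))) * indicator {t j..} x)"

definition width :: "(nat \<Rightarrow> nat) \<Rightarrow> real \<Rightarrow> real" where
  "width a x = mesh
     + mesh * (\<Sum>j\<in>{1..m}. (real (a j) - real (a (j - 1))) * indicator {t (j - 1)<..<t j} x)
     + 2 * C * indicator (- {0..t m}) x"

lemma mesh_pos: "mesh > 0"
  using C_pos m_pos by (simp add: mesh_def)

lemma mesh_times_m: "mesh * real m = 2 * C"
  using m_pos by (simp add: mesh_def)

lemma mesh_le: "mesh \<le> 2 * C"
  using C_pos m_pos by (simp add: mesh_def field_simps)

lemma lower_measurable [measurable]: "lower a \<in> borel_measurable borel"
  unfolding lower_def by measurable

lemma width_measurable [measurable]: "width a \<in> borel_measurable borel"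
  unfolding width_def by measurable

lemma lower_measurable_on_unit [measurable]:
  "lower a \<in> borel_measurable (restrict_space borel {0..1})"
  by (simp add: measurable_restrict_space1)

lemma width_measurable_on_unit [measurable]:
  "width a \<in> borel_measurable (restrict_space borel {0..1})"
  by (simp add: measurable_restrict_space1)

lemma grid_cell_exists:
  assumes "0 \<le> x"
  obtains k where "k \<le> m" "t k \<le> x" "\<And>j. k < j \<Longrightarrow> j \<le> m \<Longrightarrow> x < t j"
proof -
  define K where "K = {j. j \<le> m \<and> t j \<le> x}"
  have K: "finite K" "0 \<in> K"
    using assms t_zero by (auto simp: K_def)
  have "Max K \<in> K"
    using Max_in[OF K(1)] K(2) by blast
  show thesis
  proof (rule that)
    show "Max K \<le> m" "t (Max K) \<le> x"
      using \<open>Max K \<in> K\<close> by (auto simp: K_def)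
    show "x < t j" if "Max K < j" "j \<le> m" for j
    proof (rule ccontr)
      assume "\<not> x < t j"
      then have "j \<in> K" using that(2) by (simp add: K_def)
      then show False using Max_ge[OF K(1)] that(1) by fastforce
    qed
  qed
qed

lemma lower_on_cell:
  assumes k: "k \<le> m" "t k \<le> x" and right: "\<And>j. k < j \<Longrightarrow> j \<le> m \<Longrightarrow> x < t j"
  shows "lower a x = - C + mesh * real (a k)"
proof -
  have below_iff: "t j \<le> x \<longleftrightarrow> j \<le> k" if "j \<le> m" for j
    using that right[of j] k mono_onD[OF t_mono, of j k] by fastforce
  have "(\<Sum>j\<in>{1..m}. (real (a j) - real (a (j - 1))) * indicator {t j..} x)
      = (\<Sum>j\<in>{Suc 0..k}. real (a j) - real (a (j - 1)))"
    using k by (intro sum.mono_neutral_cong_right) (auto simp: below_iff indicator_def)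
  also have "(\<Sum>j\<in>{Suc 0..k}. real (a j) - real (a (j - 1))) = real (a k) - real (a 0)"
    by (rule sum_telescope'') simp
  finally have jumps: "(\<Sum>j\<in>{1..m}. (real (a j) - real (a (j - 1))) * indicator {t j..} x)
      = real (a k) - real (a 0)" .
  show ?thesis
    unfolding lower_def jumps by (simp add: algebra_simps)
qed

context
  fixes h :: "real \<Rightarrow> real"
  assumes h: "h \<in> mono_class C"
begin

lemma h_mono: "mono_on {0..1} h" and h_bounded: "x \<in> {0..1} \<Longrightarrow> \<bar>h x\<bar> \<le> C"
  using h by (auto simp: mono_class_def)

lemma level_bounds:
  assumes j: "j \<le> m"
  shows "- C + mesh * real (level h j) \<le> h (t j)" "h (t j) < - C + mesh * (real (level h j) + 1)"
proof -
  define v where "v = (h (t j) + C) / mesh"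
  have "0 \<le> v"
    using h_bounded[OF t_unit[OF j]] mesh_pos by (simp add: v_def)
  then have level: "real (level h j) = of_int \<lfloor>v\<rfloor>"
    using j by (simp add: level_def v_def)
  have "h (t j) = - C + mesh * v"
    using mesh_pos by (simp add: v_def)
  then show "- C + mesh * real (level h j) \<le> h (t j)" "h (t j) < - C + mesh * (real (level h j) + 1)"
    unfolding level using mesh_pos by simp_all
qed

lemma level_le:
  assumes j: "j \<le> m"
  shows "level h j \<le> m"
proof -
  have "mesh * real (level h j) \<le> mesh * real m"
    using level_bounds(1)[OF j] h_bounded[OF t_unit[OF j]] mesh_times_m by linarith
  then show ?thesis using mesh_pos by simp
qed

lemma level_mono:
  assumes "i \<le> j" "j \<le> m"
  shows "level h i \<le> level h j"
proof -
  have "h (t i) \<le> h (t j)"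
    using assms t_unit t_mono by (intro mono_onD[OF h_mono]) (auto simp: mono_on_def)
  then have "(h (t i) + C) / mesh \<le> (h (t j) + C) / mesh"
    using mesh_pos by (simp add: divide_right_mono)
  then show ?thesis
    using assms by (simp add: level_def floor_mono nat_mono)
qed

lemma level_jump_nonneg: "j \<in> {1..m} \<Longrightarrow> 0 \<le> real (level h j) - real (level h (j - 1))"
  using level_mono[of "j - 1" j] by simp

lemma jumps_in_cells_nonneg:
  "0 \<le> (\<Sum>j\<in>{1..m}. (real (level h j) - real (level h (j - 1))) * indicator (I j) x)"
  by (intro sum_nonneg mult_nonneg_nonneg level_jump_nonneg) simp_all

lemma width_ge_mesh: "mesh \<le> width (level h) x"
  using jumps_in_cells_nonneg[of "\<lambda>j. {t (j - 1)<..<t j}" x] mesh_pos C_pos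
  by (simp add: width_def)

lemma width_ge_jump:
  assumes j: "j \<in> {1..m}" and x: "x \<in> {t (j - 1)<..<t j}"
  shows "mesh + mesh * (real (level h j) - real (level h (j - 1))) \<le> width (level h) x"
proof -
  have "real (level h j) - real (level h (j - 1))
      \<le> (\<Sum>i\<in>{1..m}. (real (level h i) - real (level h (i - 1))) * indicator {t (i - 1)<..<t i} x)"
    using member_le_sum[OF j, of "\<lambda>i. (real (level h i) - real (level h (i - 1)))
      * indicator {t (i - 1)<..<t i} x"] x level_jump_nonneg
    by (simp add: mult_nonneg_nonneg)
  then have "mesh * (real (level h j) - real (level h (j - 1)))
      \<le> mesh * (\<Sum>i\<in>{1..m}. (real (level h i) - real (level h (i - 1))) * indicator {t (i - 1)<..<t i} x)"
    using mesh_pos by (intro mult_left_mono) auto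
  moreover have "0 \<le> 2 * C * indicator (- {0..t m}) x"
    using C_pos by simp
  ultimately show ?thesis
    unfolding width_def by linarith
qed

lemma width_ge_outside:
  assumes "x \<notin> {0..t m}"
  shows "mesh + 2 * C \<le> width (level h) x"
  using assms jumps_in_cells_nonneg[of "\<lambda>j. {t (j - 1)<..<t j}" x] mesh_pos
  by (simp add: width_def)

lemma width_le: "width (level h) x \<le> 6 * C"
proof -
  have "(\<Sum>j\<in>{1..m}. (real (level h j) - real (level h (j - 1))) * indicator {t (j - 1)<..<t j} x)
      \<le> (\<Sum>j\<in>{1..m}. real (level h j) - real (level h (j - 1)))"
    using level_jump_nonneg by (intro sum_mono mult_left_le) (auto simp: indicator_def)
  also have "\<dots> = real (level h m) - real (level h 0)"
    using sum_telescope''[of 0 m "\<lambda>j. real (level h j)"] by simp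
  also have "\<dots> \<le> real m"
    using level_le[of m] by simp
  finally have "mesh * (\<Sum>j\<in>{1..m}. (real (level h j) - real (level h (j - 1)))
      * indicator {t (j - 1)<..<t j} x) \<le> mesh * real m"
    by (rule mult_left_mono) (use mesh_pos in simp)
  moreover have "2 * C * indicator (- {0..t m}) x \<le> 2 * C"
    using C_pos by (simp add: indicator_def)
  ultimately show ?thesis
    using mesh_le mesh_times_m unfolding width_def by linarith
qed

lemma lower_bracket:
  assumes x: "x \<in> {0..1}"
  shows "- C \<le> lower (level h) x" "lower (level h) x \<le> h x"
    "h x \<le> lower (level h) x + width (level h) x"
proof -
  obtain k where k: "k \<le> m" "t k \<le> x" and right: "\<And>j. k < j \<Longrightarrow> j \<le> m \<Longrightarrow> x < t j"
    using grid_cell_exists x by auto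
  have lower: "lower (level h) x = - C + mesh * real (level h k)"
    by (rule lower_on_cell[OF k right])
  show "- C \<le> lower (level h) x"
    using lower mesh_pos by simp
  have "h (t k) \<le> h x"
    using k x t_unit by (intro mono_onD[OF h_mono]) auto
  then show "lower (level h) x \<le> h x"
    using lower level_bounds(1)[OF k(1)] by simp
  show "h x \<le> lower (level h) x + width (level h) x"
  proof (cases "x = t k")
    case True
    then show ?thesis
      using lower level_bounds(2)[OF k(1)] width_ge_mesh[of x] by (simp add: distrib_left)
  next
    case False
    with k have "t k < x" by simp
    consider "k = m" | "Suc k \<le> m" using k by linarith
    then show ?thesis
    proof cases
      case 1
      then have "mesh + 2 * C \<le> width (level h) x"
        using \<open>t k < x\<close> by (intro width_ge_outside) auto
      moreover have "0 \<le> mesh * real (level h k)"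
        using mesh_pos by simp
      ultimately show ?thesis
        using lower abs_le_D1[OF h_bounded[OF x]] mesh_pos by linarith
    next
      case 2
      have cell: "x \<in> {t (Suc k - 1)<..<t (Suc k)}"
        using \<open>t k < x\<close> right[of "Suc k"] 2 by simp
      have "h x \<le> h (t (Suc k))"
        using x t_unit[OF 2] cell by (intro mono_onD[OF h_mono]) auto
      also have "\<dots> < - C + mesh * (real (level h (Suc k)) + 1)"
        by (rule level_bounds(2)[OF 2])
      also have "\<dots> \<le> lower (level h) x + width (level h) x"
        using width_ge_jump[of "Suc k" x] 2 cell lower by (simp add: algebra_simps)
      finally show ?thesis by simp
    qed
  qed
qed

lemma width_integral_le:
  fixes D :: "real measure"
  assumes "real_distribution D" and unit: "measure D {0..1} = 1"
    and cells: "\<And>j. j \<in> {1..m} \<Longrightarrow> measure D {t (j - 1)<..<t j} \<le> 1 / real m"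
    and tail: "measure D {t m<..} = 0"
  shows "integral\<^sup>L D (width (level h)) \<le> 2 * mesh"
proof -
  interpret D: real_distribution D by fact
  define c where "c j = real (level h j) - real (level h (j - 1))" for j
  have "measure D (- {0..t m}) \<le> measure D (- {0..1} \<union> {t m<..})"
    using t_unit[of m] by (intro D.finite_measure_mono) auto
  also have "\<dots> \<le> measure D (- {0..1}) + measure D {t m<..}"
    by (rule measure_Un_le) auto
  also have "measure D (- {0..1}) = 0"
    using D.prob_compl[of "{0..1}"] unit by (simp add: Compl_eq_Diff_UNIV)
  finally have outside: "measure D (- {0..t m}) = 0"
    using tail measure_nonneg[of D "- {0..t m}"] by linarith
  have "(\<Sum>j\<in>{1..m}. c j * measure D {t (j - 1)<..<t j}) \<le> (\<Sum>j\<in>{1..m}. c j * (1 / real m))"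
    using cells level_jump_nonneg by (intro sum_mono mult_left_mono) (auto simp: c_def)
  also have "\<dots> = (real (level h m) - real (level h 0)) / real m"
    using sum_telescope''[of 0 m "\<lambda>j. real (level h j)"] by (simp add: c_def sum_divide_distrib[symmetric])
  also have "\<dots> \<le> 1"
    using level_le[of m] m_pos by simp
  finally have "mesh * (\<Sum>j\<in>{1..m}. c j * measure D {t (j - 1)<..<t j}) \<le> mesh"
    using mesh_pos by (simp add: mult_left_le)
  moreover have "integral\<^sup>L D (width (level h))
      = mesh + mesh * (\<Sum>j\<in>{1..m}. c j * measure D {t (j - 1)<..<t j})
        + 2 * C * measure D (- {0..t m})"
  proof -
    have indicator_integrable: "integrable D (indicator A :: real \<Rightarrow> real)" if "A \<in> sets borel" for A
      using that by (intro integrable_real_indicator) (auto simp: D.emeasure_eq_measure)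
    define S where "S x = (\<Sum>j\<in>{1..m}. c j * indicator {t (j - 1)<..<t j} x)" for x :: real
    have S_integrable: "integrable D S"
      unfolding S_def by (intro Bochner_Integration.integrable_sum integrable_mult_right indicator_integrable) auto
    have "integral\<^sup>L D S = (\<Sum>j\<in>{1..m}. c j * measure D {t (j - 1)<..<t j})"
      unfolding S_def
      by (subst Bochner_Integration.integral_sum)
        (auto intro: integrable_mult_right indicator_integrable simp: integral_mult_right_zero)
    moreover have "width (level h) = (\<lambda>x. (mesh + mesh * S x) + 2 * C * indicator (- {0..t m}) x)"
      by (simp add: fun_eq_iff width_def S_def c_def)
    ultimately show ?thesis
      using S_integrable indicator_integrable[of "- {0..t m}"] D.prob_space
      by (simp add: integral_mult_right_zero)
  qed
  ultimately show ?thesis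
    using outside by simp
qed

end

lemma level_image_subset: "level ` mono_class C \<subseteq> {..m} \<rightarrow>\<^sub>E {..m}"
proof
  fix a assume "a \<in> level ` mono_class C"
  then obtain h where "h \<in> mono_class C" "a = level h" by blast
  then show "a \<in> {..m} \<rightarrow>\<^sub>E {..m}"
    using level_le by (auto simp: level_def)
qed

lemma finite_level_image: "finite (level ` mono_class C)"
  by (rule finite_subset[OF level_image_subset]) (simp add: finite_PiE)

lemma card_level_image_le: "card (level ` mono_class C) \<le> (m + 1) ^ (m + 1)"
proof -
  have "card (level ` mono_class C) \<le> card ({..m} \<rightarrow>\<^sub>E {..m})"
    by (rule card_mono[OF _ level_image_subset]) (simp add: finite_PiE)
  then show ?thesis by (simp add: card_PiE)
qed

end

section \<open>Empirical deviations of an i.i.d. sample in \<open>[0, 1]\<close>\<close>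

locale unit_iid_sample = prob_space M for M :: "'a measure" +
  fixes X :: "nat \<Rightarrow> 'a \<Rightarrow> real" and n :: nat
  assumes n_pos: "n \<ge> 1"
    and X_measurable [measurable]: "\<And>i. X i \<in> borel_measurable M"
    and X_indep: "indep_vars (\<lambda>_. borel) X {1..n}"
    and X_ident: "\<And>i. i \<in> {1..n} \<Longrightarrow> distr M borel (X i) = distr M borel (X 1)"
    and X_unit: "\<And>i \<omega>. i \<in> {1..n} \<Longrightarrow> \<omega> \<in> space M \<Longrightarrow> X i \<omega> \<in> {0..1}"
begin

definition empirical_dev :: "(real \<Rightarrow> real) \<Rightarrow> 'a \<Rightarrow> real" where
  "empirical_dev f \<omega> = (\<Sum>i\<in>{1..n}. f (X i \<omega>)) / real n - expectation (\<lambda>\<omega>'. f (X 1 \<omega>'))"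

definition deviation_event :: "real \<Rightarrow> (real \<Rightarrow> real) \<Rightarrow> 'a set" where
  "deviation_event \<eta> f = {\<omega> \<in> space M. \<eta> \<le> \<bar>empirical_dev f \<omega>\<bar>}"

lemma one_in_sample: "1 \<in> {1..n}"
  using n_pos by simp

lemma X_unit_measurable: "i \<in> {1..n} \<Longrightarrow> X i \<in> M \<rightarrow>\<^sub>M restrict_space borel {0..1}"
  using X_unit by (intro measurable_restrict_space2) auto

lemma measure_distr_X_unit: "measure (distr M borel (X 1)) {0..1} = 1"
proof -
  have "X 1 -` {0..1} \<inter> space M = space M"
    using X_unit[OF one_in_sample] by auto
  then show ?thesis
    by (simp add: measure_distr prob_space)
qed

lemma integrable_bounded_on_unit:
  fixes f :: "real \<Rightarrow> real"
  assumes "f \<in> borel_measurable (restrict_space borel {0..1})" and "\<And>x. x \<in> {0..1} \<Longrightarrow> \<bar>f x\<bar> \<le> B"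
  shows "integrable M (\<lambda>\<omega>. f (X 1 \<omega>))"
proof (rule integrable_const_bound[where B = B])
  show "AE \<omega> in M. norm (f (X 1 \<omega>)) \<le> B"
    using assms(2) X_unit[OF one_in_sample] by (intro AE_I2) auto
  show "(\<lambda>\<omega>. f (X 1 \<omega>)) \<in> borel_measurable M"
    using measurable_comp[OF X_unit_measurable[OF one_in_sample] assms(1)] by (simp add: comp_def)
qed

lemma deviation_event_sets:
  assumes "f \<in> borel_measurable (restrict_space borel {0..1})"
  shows "deviation_event \<eta> f \<in> events"
proof -
  have "(\<lambda>\<omega>. f (X i \<omega>)) \<in> borel_measurable M" if "i \<in> {1..n}" for i
    using measurable_comp[OF X_unit_measurable[OF that] assms] by (simp add: comp_def)
  then have "empirical_dev f \<in> borel_measurable M"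
    unfolding empirical_dev_def[abs_def] by measurable
  then show ?thesis
    unfolding deviation_event_def by measurable
qed

lemma Delta_eq_empirical_dev: "Delta M X n f \<omega> = empirical_dev (\<lambda>x. (f x)\<^sup>2) \<omega>"
  using n_pos by (simp add: Delta_def empirical_dev_def sum_subtractf right_diff_distrib)

lemma empirical_dev_cmult: "empirical_dev (\<lambda>x. c * f x) \<omega> = c * empirical_dev f \<omega>"
  by (simp add: empirical_dev_def sum_distrib_left[symmetric] right_diff_distrib)

lemma empirical_dev_hoeffding:
  assumes f: "f \<in> borel_measurable (restrict_space borel {0..1})"
    and f_range: "\<And>x. x \<in> {0..1} \<Longrightarrow> f x \<in> {a..b}" and "a < b" "\<eta> \<ge> 0"
  shows "prob (deviation_event \<eta> f) \<le> 2 * exp (-2 * real n * \<eta>\<^sup>2 / (b - a)\<^sup>2)"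
proof -
  define fc where "fc x = f (max 0 (min 1 x))" for x
  have fc [measurable]: "fc \<in> borel_measurable borel"
    unfolding fc_def by (rule measurable_clamp_unit[OF f])
  have fc_X: "fc (X i \<omega>) = f (X i \<omega>)" if "i \<in> {1..n}" "\<omega> \<in> space M" for i \<omega>
    using X_unit[OF that] by (simp add: fc_def)
  interpret H: Hoeffding_ineq_iid M "{1..n}" "\<lambda>i \<omega>. fc (X i \<omega>)" "\<lambda>\<omega>. fc (X 1 \<omega>)" a b
    "expectation (\<lambda>\<omega>. fc (X 1 \<omega>))"
  proof unfold_locales
    show "finite {1..n}" by simp
    show "indep_vars (\<lambda>_. borel) (\<lambda>i \<omega>. fc (X i \<omega>)) {1..n}"
      using indep_vars_compose2[OF X_indep, of "\<lambda>_. fc" "\<lambda>_. borel"] by simp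
    show "distr M borel (\<lambda>\<omega>. fc (X i \<omega>)) = distr M borel (\<lambda>\<omega>. fc (X 1 \<omega>))" if "i \<in> {1..n}" for i
      using distr_distr[of fc borel borel "X i" M] distr_distr[of fc borel borel "X 1" M] X_ident[OF that]
      by (simp add: comp_def)
    show "random_variable borel (\<lambda>\<omega>. fc (X 1 \<omega>))" by measurable
    show "AE \<omega> in M. fc (X 1 \<omega>) \<in> {a..b}"
      using f_range fc_X[OF one_in_sample] X_unit[OF one_in_sample] by (intro AE_I2) auto
  qed
  have mean_eq: "expectation (\<lambda>\<omega>. fc (X 1 \<omega>)) = expectation (\<lambda>\<omega>. f (X 1 \<omega>))"
    by (rule Bochner_Integration.integral_cong[OF refl fc_X[OF one_in_sample]])
  have "deviation_event \<eta> f = {\<omega> \<in> space M.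
      \<eta> \<le> \<bar>(\<Sum>i\<in>{1..n}. fc (X i \<omega>)) / real (card {1..n}) - expectation (\<lambda>\<omega>. fc (X 1 \<omega>))\<bar>}"
    unfolding deviation_event_def
  proof (intro Collect_cong conj_cong refl)
    fix \<omega> assume "\<omega> \<in> space M"
    then have "(\<Sum>i\<in>{1..n}. fc (X i \<omega>)) = (\<Sum>i\<in>{1..n}. f (X i \<omega>))"
      using fc_X by (intro sum.cong) auto
    then show "\<eta> \<le> \<bar>empirical_dev f \<omega>\<bar> \<longleftrightarrow> \<eta> \<le> \<bar>(\<Sum>i\<in>{1..n}. fc (X i \<omega>)) / real (card {1..n})
        - expectation (\<lambda>\<omega>. fc (X 1 \<omega>))\<bar>"
      by (simp only: empirical_dev_def mean_eq card_atLeastAtMost diff_Suc_1)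
  qed
  also have "prob \<dots> \<le> 2 * exp (-2 * real (card {1..n}) * \<eta>\<^sup>2 / (b - a)\<^sup>2)"
    by (rule H.Hoeffding_ineq_abs_ge') (use \<open>a < b\<close> \<open>\<eta> \<ge> 0\<close> n_pos in auto)
  finally show ?thesis
    by (simp only: card_atLeastAtMost diff_Suc_1)
qed

lemma empirical_dev_bracket:
  assumes \<omega>: "\<omega> \<in> space M" and close: "\<And>x. x \<in> {0..1} \<Longrightarrow> \<bar>q x - p x\<bar> \<le> w x"
    and q: "integrable M (\<lambda>\<omega>. q (X 1 \<omega>))" and p: "integrable M (\<lambda>\<omega>. p (X 1 \<omega>))"
    and w: "integrable M (\<lambda>\<omega>. w (X 1 \<omega>))"
  shows "\<bar>empirical_dev q \<omega>\<bar>
    \<le> \<bar>empirical_dev p \<omega>\<bar> + \<bar>empirical_dev w \<omega>\<bar> + 2 * expectation (\<lambda>\<omega>. w (X 1 \<omega>))"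
proof -
  let ?mean = "\<lambda>f. (\<Sum>i\<in>{1..n}. f (X i \<omega>)) / real n"
  let ?E = "\<lambda>f. expectation (\<lambda>\<omega>. f (X 1 \<omega>))"
  have "\<bar>?mean q - ?mean p\<bar> \<le> ?mean w"
  proof -
    have "\<bar>\<Sum>i\<in>{1..n}. q (X i \<omega>) - p (X i \<omega>)\<bar> \<le> (\<Sum>i\<in>{1..n}. w (X i \<omega>))"
      using close X_unit[OF _ \<omega>] by (intro order_trans[OF sum_abs sum_mono]) auto
    then show ?thesis
      using n_pos by (simp add: sum_subtractf diff_divide_distrib[symmetric] divide_right_mono)
  qed
  moreover have "\<bar>?E q - ?E p\<bar> \<le> ?E w"
  proof -
    have "\<bar>?E q - ?E p\<bar> = \<bar>expectation (\<lambda>\<omega>. q (X 1 \<omega>) - p (X 1 \<omega>))\<bar>"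
      using q p by simp
    also have "\<dots> \<le> expectation (\<lambda>\<omega>. \<bar>q (X 1 \<omega>) - p (X 1 \<omega>)\<bar>)"
      by (rule integral_abs_bound)
    also have "\<dots> \<le> ?E w"
      using q p w close X_unit[OF one_in_sample] by (intro integral_mono) auto
    finally show ?thesis .
  qed
  ultimately show ?thesis
    unfolding empirical_dev_def by linarith
qed

end

section \<open>Uniform deviation over the monotone class\<close>

locale bracketed_sample = unit_iid_sample M X n + monotone_bracketing C m t
  for M :: "'a measure" and X n C m t +
  assumes cells: "\<And>j. j \<in> {1..m} \<Longrightarrow> measure (distr M borel (X 1)) {t (j - 1)<..<t j} \<le> 1 / real m"
    and tail: "measure (distr M borel (X 1)) {t m<..} = 0"
begin

lemma expectation_width_le:
  assumes "h \<in> mono_class C"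
  shows "expectation (\<lambda>\<omega>. width (level h) (X 1 \<omega>)) \<le> 4 * C / real m"
proof -
  have "integral\<^sup>L (distr M borel (X 1)) (width (level h)) \<le> 2 * mesh"
    using assms measure_distr_X_unit cells tail by (intro width_integral_le) auto
  then show ?thesis
    by (simp add: integral_distr mesh_def)
qed

lemma Delta_le_if_level_deviations_small:
  assumes g [measurable]: "g \<in> borel_measurable (restrict_space borel {0..1})"
    and g_bounded: "\<And>x. x \<in> {0..1} \<Longrightarrow> \<bar>g x\<bar> \<le> C"
    and h: "h \<in> mono_class C" and \<omega>: "\<omega> \<in> space M"
    and square_dev: "\<bar>empirical_dev (\<lambda>x. (g x - lower (level h) x)\<^sup>2) \<omega>\<bar> < 1 / real m"
    and width_dev: "\<bar>empirical_dev (width (level h)) \<omega>\<bar> < 1 / real m"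
  shows "\<bar>Delta M X n (\<lambda>x. g x - h x) \<omega>\<bar> \<le> (1 + 4 * C + 32 * C\<^sup>2) / real m"
proof -
  define q where "q x = (g x - h x)\<^sup>2" for x
  define p where "p x = (g x - lower (level h) x)\<^sup>2" for x
  define w where "w x = 4 * C * width (level h) x" for x
  have [measurable]: "h \<in> borel_measurable (restrict_space borel {0..1})"
    using h by (intro borel_measurable_mono_on_fnc) (simp add: mono_class_def)
  have close: "\<bar>q x - p x\<bar> \<le> w x" if x: "x \<in> {0..1}" for x
    unfolding q_def p_def w_def
    by (rule abs_diff_squares_le[OF g_bounded[OF x] h_bounded[OF h x] lower_bracket[OF h x]])
  have w_bounded: "\<bar>w x\<bar> \<le> 4 * C * (6 * C)" for x
    using width_ge_mesh[OF h, of x] width_le[OF h, of x] mesh_pos C_pos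
    by (simp add: w_def abs_mult)
  have p_bounded: "\<bar>p x\<bar> \<le> (2 * C)\<^sup>2" if x: "x \<in> {0..1}" for x
  proof -
    have "\<bar>g x - lower (level h) x\<bar> \<le> \<bar>2 * C\<bar>"
      using g_bounded[OF x] h_bounded[OF h x] lower_bracket[OF h x] C_pos by linarith
    then show ?thesis by (simp add: p_def abs_le_square_iff)
  qed
  have integrable: "integrable M (\<lambda>\<omega>. p (X 1 \<omega>))" "integrable M (\<lambda>\<omega>. w (X 1 \<omega>))"
    "integrable M (\<lambda>\<omega>. q (X 1 \<omega>))"
  proof -
    show "integrable M (\<lambda>\<omega>. p (X 1 \<omega>))"
      by (rule integrable_bounded_on_unit[OF _ p_bounded]) (simp add: p_def)
    show "integrable M (\<lambda>\<omega>. w (X 1 \<omega>))"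
      by (rule integrable_bounded_on_unit[OF _ w_bounded]) (simp add: w_def)
    have "\<bar>q x\<bar> \<le> (2 * C)\<^sup>2 + 4 * C * (6 * C)" if x: "x \<in> {0..1}" for x
      using close[OF x] p_bounded[OF x] w_bounded[of x] unfolding abs_le_iff by linarith
    then show "integrable M (\<lambda>\<omega>. q (X 1 \<omega>))"
      by (rule integrable_bounded_on_unit[rotated]) (unfold q_def[abs_def], measurable)
  qed
  have "\<bar>Delta M X n (\<lambda>x. g x - h x) \<omega>\<bar> = \<bar>empirical_dev q \<omega>\<bar>"
    by (simp add: Delta_eq_empirical_dev q_def[abs_def])
  also have "\<dots> \<le> \<bar>empirical_dev p \<omega>\<bar> + \<bar>empirical_dev w \<omega>\<bar> + 2 * expectation (\<lambda>\<omega>. w (X 1 \<omega>))"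
    by (rule empirical_dev_bracket[OF \<omega> close integrable(3,1,2)])
  also have "\<dots> \<le> 1 / real m + 4 * C * (1 / real m) + 2 * (4 * C * (4 * C / real m))"
  proof -
    have "\<bar>empirical_dev w \<omega>\<bar> = 4 * C * \<bar>empirical_dev (width (level h)) \<omega>\<bar>"
      using C_pos unfolding w_def[abs_def] empirical_dev_cmult by (simp add: abs_mult)
    also have "\<dots> \<le> 4 * C * (1 / real m)"
      using width_dev C_pos by (intro mult_left_mono) auto
    finally have "\<bar>empirical_dev w \<omega>\<bar> \<le> 4 * C * (1 / real m)" .
    moreover have "expectation (\<lambda>\<omega>. w (X 1 \<omega>)) \<le> 4 * C * (4 * C / real m)"
      using mult_left_mono[OF expectation_width_le[OF h], of "4 * C"] C_pos unfolding w_def by simp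
    ultimately show ?thesis
      using square_dev unfolding p_def by linarith
  qed
  also have "\<dots> = (1 + 4 * C + 32 * C\<^sup>2) / real m"
    using m_pos by (simp add: field_simps power2_eq_square)
  finally show ?thesis .
qed

lemma prob_level_deviations_le:
  assumes g [measurable]: "g \<in> borel_measurable (restrict_space borel {0..1})"
    and g_bounded: "\<And>x. x \<in> {0..1} \<Longrightarrow> \<bar>g x\<bar> \<le> C"
  shows "prob (\<Union>a\<in>level ` mono_class C. deviation_event (1 / real m) (\<lambda>x. (g x - lower a x)\<^sup>2)
      \<union> deviation_event (1 / real m) (width a))
    \<le> 4 * real ((m + 1) ^ (m + 1)) * exp (-2 * real n * (1 / real m)\<^sup>2 / (4 * C\<^sup>2 + 6 * C)\<^sup>2)"
    (is "prob (\<Union>a\<in>?L. ?A a) \<le> _")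
proof -
  define R where "R = 4 * C\<^sup>2 + 6 * C"
  define E where "E = exp (-2 * real n * (1 / real m)\<^sup>2 / R\<^sup>2)"
  have R_pos: "0 < R"
    using C_pos by (simp add: R_def add_pos_nonneg)
  have deviation_bound: "prob (deviation_event (1 / real m) f) \<le> 2 * E"
    if "f \<in> borel_measurable (restrict_space borel {0..1})" "\<And>x. x \<in> {0..1} \<Longrightarrow> f x \<in> {0..R}" for f
    using empirical_dev_hoeffding[OF that R_pos] by (simp add: E_def)
  have A_sets: "?A a \<in> events" for a
    by (intro sets.Un deviation_event_sets) measurable
  have "prob (?A a) \<le> 4 * E" if "a \<in> ?L" for a
  proof -
    obtain h where h: "h \<in> mono_class C" and a: "a = level h"
      using \<open>a \<in> ?L\<close> by blast
    have "(g x - lower a x)\<^sup>2 \<in> {0..R}" if x: "x \<in> {0..1}" for x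
    proof -
      have "\<bar>g x - lower a x\<bar> \<le> \<bar>2 * C\<bar>"
        using g_bounded[OF x] h_bounded[OF h x] lower_bracket[OF h x] C_pos unfolding a by linarith
      then have "(g x - lower a x)\<^sup>2 \<le> (2 * C)\<^sup>2"
        by (simp only: abs_le_square_iff)
      then show ?thesis
        using C_pos by (simp add: R_def power_mult_distrib)
    qed
    moreover have "width a x \<in> {0..R}" for x
    proof -
      have "6 * C \<le> R" by (simp add: R_def)
      then show ?thesis
        using width_ge_mesh[OF h, of x] width_le[OF h, of x] mesh_pos unfolding a by auto
    qed
    ultimately have "prob (deviation_event (1 / real m) (\<lambda>x. (g x - lower a x)\<^sup>2)) \<le> 2 * E"
      "prob (deviation_event (1 / real m) (width a)) \<le> 2 * E"
      by (auto intro!: deviation_bound)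
    then show ?thesis
      using measure_Un_le[of "deviation_event (1 / real m) (\<lambda>x. (g x - lower a x)\<^sup>2)" M
          "deviation_event (1 / real m) (width a)"] A_sets deviation_event_sets
      by (simp add: deviation_event_sets)
  qed
  then have "(\<Sum>a\<in>?L. prob (?A a)) \<le> (\<Sum>a\<in>?L. 4 * E)"
    by (rule sum_mono)
  with measure_UNION_le[OF finite_level_image, of ?A M] A_sets
  have "prob (\<Union>a\<in>?L. ?A a) \<le> (\<Sum>a\<in>?L. 4 * E)"
    by (meson order_trans)
  also have "\<dots> = real (card ?L) * (4 * E)"
    by simp
  also have "\<dots> \<le> real ((m + 1) ^ (m + 1)) * (4 * E)"
    by (rule mult_right_mono) (simp only: of_nat_le_iff card_level_image_le, simp add: E_def)
  finally show ?thesis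
    by (simp only: E_def R_def mult_ac)
qed

end

context unit_iid_sample
begin

lemma sup_Delta_le_outside_deviation_event:
  fixes C :: real and m :: nat
  assumes C: "C > 0" and m: "m \<ge> 1"
    and g [measurable]: "g \<in> borel_measurable (restrict_space borel {0..1})"
    and g_bounded: "\<And>x. x \<in> {0..1} \<Longrightarrow> \<bar>g x\<bar> \<le> C"
  obtains A where "A \<in> events"
    "prob A \<le> 4 * real ((m + 1) ^ (m + 1)) * exp (-2 * real n * (1 / real m)\<^sup>2 / (4 * C\<^sup>2 + 6 * C)\<^sup>2)"
    "\<And>\<omega>. \<omega> \<in> space M - A \<Longrightarrow>
      (SUP h\<in>mono_class C. \<bar>Delta M X n (\<lambda>x. g x - h x) \<omega>\<bar>) \<le> (1 + 4 * C + 32 * C\<^sup>2) / real m"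
proof -
  interpret D: real_distribution "distr M borel (X 1)"
    by simp
  obtain t where t: "t 0 = 0" "\<And>j. j \<le> m \<Longrightarrow> t j \<in> {0..1}" "mono_on {..m} t"
    "\<And>j. j \<in> {1..m} \<Longrightarrow> measure (distr M borel (X 1)) {t (j - 1)<..<t j} \<le> 1 / real m"
    "measure (distr M borel (X 1)) {t m<..} = 0"
    using D.quantile_grid_exists[OF measure_distr_X_unit m] by blast
  interpret bracketed_sample M X n C m t
    by unfold_locales (use C m t in auto)
  define A where "A = (\<Union>a\<in>level ` mono_class C. deviation_event (1 / real m) (\<lambda>x. (g x - lower a x)\<^sup>2)
    \<union> deviation_event (1 / real m) (width a))"
  show thesis
  proof (rule that)
    show "A \<in> events"
      unfolding A_def
      by (intro sets.finite_UN finite_level_image sets.Un deviation_event_sets) measurable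
    show "prob A \<le> 4 * real ((m + 1) ^ (m + 1))
        * exp (-2 * real n * (1 / real m)\<^sup>2 / (4 * C\<^sup>2 + 6 * C)\<^sup>2)"
      unfolding A_def by (rule prob_level_deviations_le[OF g g_bounded])
  next
    fix \<omega> assume \<omega>: "\<omega> \<in> space M - A"
    have "(\<lambda>_. 0) \<in> mono_class C"
      using C by (simp add: mono_class_def mono_on_def)
    then have nonempty: "mono_class C \<noteq> {}"
      by blast
    show "(SUP h\<in>mono_class C. \<bar>Delta M X n (\<lambda>x. g x - h x) \<omega>\<bar>) \<le> (1 + 4 * C + 32 * C\<^sup>2) / real m"
    proof (rule cSUP_least[OF nonempty])
      fix h assume h: "h \<in> mono_class C"
      then have "\<omega> \<notin> deviation_event (1 / real m) (\<lambda>x. (g x - lower (level h) x)\<^sup>2)"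
        "\<omega> \<notin> deviation_event (1 / real m) (width (level h))"
        using \<omega> by (auto simp: A_def)
      then show "\<bar>Delta M X n (\<lambda>x. g x - h x) \<omega>\<bar> \<le> (1 + 4 * C + 32 * C\<^sup>2) / real m"
        using \<omega> by (intro Delta_le_if_level_deviations_small[OF g g_bounded h]) (auto simp: deviation_event_def)
    qed
  qed
qed

lemma sup_Delta_tail_bound:
  fixes C :: real
  assumes C: "C > 0"
    and g: "g \<in> borel_measurable (restrict_space borel {0..1})"
    and g_bounded: "\<And>x. x \<in> {0..1} \<Longrightarrow> \<bar>g x\<bar> \<le> C"
  shows "\<exists>A\<in>events.
    {\<omega> \<in> space M. (SUP h\<in>mono_class C. \<bar>Delta M X n (\<lambda>x. g x - h x) \<omega>\<bar>) > real n powr (- (1 / 16))} \<subseteq> A \<and>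
    prob A \<le> 4 * exp (6 * (4 * C\<^sup>2 + 6 * C) + 16 * (1 + 4 * C + 32 * C\<^sup>2) ^ 4) * exp (- (real n powr (1 / 4)))"
proof -
  define R where "R = 4 * C\<^sup>2 + 6 * C"
  define B where "B = 1 + 4 * C + 32 * C\<^sup>2"
  define T where "T = 6 * R + 16 * B ^ 4"
  define r where "r = real n powr (1 / 16)"
  have R_pos: "0 < R" and B_pos: "0 < B"
    using C by (simp_all add: R_def B_def add_pos_nonneg)
  have r: "1 \<le> r"
    using n_pos by (simp add: r_def ge_one_powr_ge_zero)
  have r_power: "r ^ k = real n powr (real k / 16)" for k
    using n_pos by (simp add: r_def powr_realpow[symmetric] powr_powr)
  have bound_eq: "4 * exp T * exp (- (real n powr (1 / 4))) = 4 * exp (T - r ^ 4)"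
    using r_power[of 4] by (simp add: exp_diff exp_minus field_simps)
  have threshold_eq: "real n powr (- (1 / 16)) = 1 / r"
    by (simp add: r_def powr_minus_divide)
  show ?thesis
    unfolding R_def[symmetric] B_def[symmetric] T_def[symmetric] bound_eq threshold_eq
  proof (cases "r < 2 * B")
    case True
    txt \<open>For small \<open>n\<close> the bound exceeds \<open>1\<close>.\<close>
    then have "r ^ 4 < (2 * B) ^ 4"
      using r by (intro power_strict_mono) auto
    then have "1 \<le> exp (T - r ^ 4)"
      using R_pos by (simp add: T_def power_mult_distrib)
    then have "prob (space M) \<le> 4 * exp (T - r ^ 4)"
      using prob_space by linarith
    then show "\<exists>A\<in>events. {\<omega> \<in> space M. 1 / r < (SUP h\<in>mono_class C. \<bar>Delta M X n (\<lambda>x. g x - h x) \<omega>\<bar>)}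
        \<subseteq> A \<and> prob A \<le> 4 * exp (T - r ^ 4)"
      by (intro bexI[of _ "space M"]) auto
  next
    case False
    txt \<open>With \<open>m \<approx> r\<^sup>2\<close> the bracketing error \<open>B/m\<close> is below \<open>1/r\<close>, while the
      \<open>(m + 1)\<^bsup>m + 1\<^esup> \<le> exp(2 r\<^sup>4)\<close> codes are beaten by the Hoeffding factor
      \<open>exp(-2 r\<^sup>1\<^sup>2 / R\<^sup>2)\<close>.\<close>
    define m where "m = nat \<lfloor>r\<^sup>2\<rfloor>"
    have "1 \<le> r\<^sup>2"
      using r by (simp add: one_le_power)
    then have m: "1 \<le> m" "real m \<le> r\<^sup>2" "r\<^sup>2 < real m + 1"
      by (simp_all add: m_def le_nat_floor)
    obtain A where A: "A \<in> events"
      "prob A \<le> 4 * real ((m + 1) ^ (m + 1)) * exp (-2 * real n * (1 / real m)\<^sup>2 / R\<^sup>2)"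
      "\<And>\<omega>. \<omega> \<in> space M - A \<Longrightarrow>
        (SUP h\<in>mono_class C. \<bar>Delta M X n (\<lambda>x. g x - h x) \<omega>\<bar>) \<le> B / real m"
      using sup_Delta_le_outside_deviation_event[OF C m(1) g g_bounded] unfolding R_def B_def by blast
    have "B / real m \<le> 1 / r"
    proof -
      have "B * r \<le> r\<^sup>2 / 2"
        using False r by (simp add: power2_eq_square mult_right_mono)
      also have "\<dots> \<le> real m"
        using m by simp
      finally show ?thesis
        using m r by (simp add: field_simps)
    qed
    moreover have "prob A \<le> 4 * exp (T - r ^ 4)"
    proof -
      have "real n = r ^ 16"
        using r_power[of 16] n_pos by simp
      then have "prob A \<le> 4 * (real ((m + 1) ^ (m + 1)) * exp (-2 * r ^ 16 * (1 / real m)\<^sup>2 / R\<^sup>2))"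
        using A(2) by (simp only: mult.assoc)
      also have "\<dots> \<le> 4 * exp (6 * R - r ^ 4)"
        using self_power_hoeffding_tradeoff[OF r R_pos m(2,3)] by simp
      also have "\<dots> \<le> 4 * exp (T - r ^ 4)"
        using B_pos by (simp add: T_def)
      finally show ?thesis .
    qed
    ultimately show "\<exists>A\<in>events. {\<omega> \<in> space M. 1 / r < (SUP h\<in>mono_class C. \<bar>Delta M X n (\<lambda>x. g x - h x) \<omega>\<bar>)}
        \<subseteq> A \<and> prob A \<le> 4 * exp (T - r ^ 4)"
      using A(1,3) by (intro bexI[of _ A]) force+
  qed
qed

end

theorem lemma2:
  fixes C :: real
  assumes "C > 0"
  shows "\<exists>\<alpha> \<beta> c1 c2 :: real. \<alpha> > 0 \<and> \<beta> > 0 \<and> c1 > 0 \<and> c2 > 0 \<and>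
    (\<forall>(M :: 'a measure) (X :: nat \<Rightarrow> 'a \<Rightarrow> real) (\<mu> :: real measure) (g :: real \<Rightarrow> real) (n :: nat).
      prob_space M \<and>
      (\<forall>i. X i \<in> borel_measurable M) \<and>
      prob_space.indep_vars M (\<lambda>_. borel) X UNIV \<and>
      (\<forall>i. distr M borel (X i) = \<mu>) \<and>
      (\<forall>i. \<forall>\<omega>\<in>space M. X i \<omega> \<in> {0..1}) \<and>
      g \<in> borel_measurable (restrict_space borel {0..1}) \<and>
      (\<forall>x\<in>{0..1}. \<bar>g x\<bar> \<le> C) \<and>
      n \<ge> 1
      \<longrightarrow>
      (\<exists>A\<in>sets M.
         {\<omega>\<in>space M. (SUP h\<in>mono_class C. \<bar>Delta M X n (\<lambda>x. g x - h x) \<omega>\<bar>) > real n powr (-\<alpha>)} \<subseteq> A \<and>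
         measure M A \<le> c1 * exp (- c2 * real n powr \<beta>)))"
proof (intro exI conjI allI impI)
  let ?c1 = "4 * exp (6 * (4 * C\<^sup>2 + 6 * C) + 16 * (1 + 4 * C + 32 * C\<^sup>2) ^ 4)"
  fix M :: "'a measure" and X :: "nat \<Rightarrow> 'a \<Rightarrow> real" and \<mu> :: "real measure"
    and g :: "real \<Rightarrow> real" and n :: nat
  assume "prob_space M \<and> (\<forall>i. X i \<in> borel_measurable M) \<and> prob_space.indep_vars M (\<lambda>_. borel) X UNIV \<and>
    (\<forall>i. distr M borel (X i) = \<mu>) \<and> (\<forall>i. \<forall>\<omega>\<in>space M. X i \<omega> \<in> {0..1}) \<and>
    g \<in> borel_measurable (restrict_space borel {0..1}) \<and> (\<forall>x\<in>{0..1}. \<bar>g x\<bar> \<le> C) \<and> n \<ge> 1"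
  then have M: "prob_space M" and X: "\<And>i. X i \<in> borel_measurable M"
    and indep: "prob_space.indep_vars M (\<lambda>_. borel) X UNIV" and ident: "\<And>i. distr M borel (X i) = \<mu>"
    and unit: "\<And>i \<omega>. \<omega> \<in> space M \<Longrightarrow> X i \<omega> \<in> {0..1}"
    and g: "g \<in> borel_measurable (restrict_space borel {0..1})" and g_bounded: "\<And>x. x \<in> {0..1} \<Longrightarrow> \<bar>g x\<bar> \<le> C"
    and n: "n \<ge> 1"
    by blast+
  interpret prob_space M by (rule M)
  interpret unit_iid_sample M X n
    using n X indep_vars_subset[OF indep] ident unit by unfold_locales auto
  show "\<exists>A\<in>sets M. {\<omega>\<in>space M. (SUP h\<in>mono_class C. \<bar>Delta M X n (\<lambda>x. g x - h x) \<omega>\<bar>) > real n powr (- (1 / 16))}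
      \<subseteq> A \<and> measure M A \<le> ?c1 * exp (- 1 * real n powr (1 / 4))"
    using sup_Delta_tail_bound[OF assms g g_bounded] by simp
qed (use assms in simp_all)

end
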